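(* Let $\mathcal Q$ be a complete orthomodular lattice and $V^{(\mathcal Q)}$ the $\mathcal Q$-valued universe. Let $[\![\cdot]\!]_{\mathcal Q}$ be a $\mathcal Q$-valued interpretation of the closed formulas of $NOM_{\mathcal Q}$ satisfying $[\![\phi\wedge\psi]\!]_{\mathcal Q}=[\![\phi]\!]_{\mathcal Q}\wedge[\![\psi]\!]_{\mathcal Q}$, $[\![\neg\phi]\!]_{\mathcal Q}=\neg[\![\phi]\!]_{\mathcal Q}$, $[\![\phi\rightarrow\psi]\!]_{\mathcal Q}=\neg[\![\phi]\!]_{\mathcal Q}\vee([\![\phi]\!]_{\mathcal Q}\wedge[\![\psi]\!]_{\mathcal Q})$ (Sasaki arrow), and $[\![(\forall x)\phi]\!]_{\mathcal Q}=\bigwedge_{u\in V^{(\mathcal Q)}}[\![\phi[x/u]]\!]_{\mathcal Q}$ (e.g., Takeuti's interpretation). For every closed formula $\phi$ of $NOM_{\mathcal Q}$, if $\vdash\phi$ is derivable in $NOM_{\mathcal Q}$, then $[\![\phi]\!]_{\mathcal Q}=\top$.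
   Context: A complete orthomodular lattice is a complete lattice with an order-reversing involution $\neg$ satisfying $a\wedge\neg a=\bot$, $a\vee\neg a=\top$, $a\le b\Rightarrow a\vee(\neg a\wedge b)=b$. $V^{(\mathcal Q)}$ is Takeuti's $\mathcal Q$-valued universe (defined as Boolean-valued models $V^{(\mathcal B)}$ with $\mathcal B$ replaced by $\mathcal Q$); the interpretation of atomic formulas $u=v$, $u\in v$ is a given element of $\mathcal Q$ and plays no role beyond the stated compositional clauses. The system $NOM_{\mathcal Q}$: formulas are first-order formulas with connectives $\wedge,\rightarrow,\neg$, quantifier $\forall$, relation symbols $=$ and $\in$, and constant symbols the elements of $V^{(\mathcal Q)}$ (no other function symbols); formulas differing only in names of bound variables are identified. Sequents $\phi_1,\ldots,\phi_n\vdash\psi$ have ordered finite antecedents. Rules, with $\Gamma$ a finite possibly empty sequence: (assumption) $\Gamma,\phi\vdash\phi$; (cut) $\Gamma\vdash\phi$, $\Gamma,\phi\vdash\psi$ $\Rightarrow$ $\Gamma\vdash\psi$; (paste) $\Gamma\vdash\phi$, $\Gamma\vdash\psi$ $\Rightarrow$ $\Gamma,\phi\vdash\psi$; (compatible exchange) $\Gamma,\phi,\psi\vdash\phi$, $\Gamma,\phi,\psi\vdash\chi$, $\Gamma,\psi,\phi\vdash\psi$ $\Rightarrow$ $\Gamma,\psi,\phi\vdash\chi$; ($\wedge$-intro) $\Gamma\vdash\phi$, $\Gamma\vdash\psi$ $\Rightarrow$ $\Gamma\vdash\phi\wedge\psi$; ($\wedge$-elim) $\Gamma\vdash\phi\wedge\psi$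 $\Rightarrow$ $\Gamma\vdash\phi$ and $\Rightarrow$ $\Gamma\vdash\psi$; ($\rightarrow$-intro) $\Gamma,\phi\vdash\psi$ $\Rightarrow$ $\Gamma\vdash\phi\rightarrow\psi$; ($\rightarrow$-elim) $\Gamma\vdash\phi\rightarrow\psi$ $\Rightarrow$ $\Gamma,\phi\vdash\psi$; (excluded middle) $\Gamma,\phi\vdash\psi$, $\Gamma,\neg\phi\vdash\psi$ $\Rightarrow$ $\Gamma\vdash\psi$; (explosion) $\Gamma\vdash\neg\phi$ $\Rightarrow$ $\Gamma,\phi\vdash\psi$; ($\forall$-intro) $\Gamma\vdash\phi$ $\Rightarrow$ $\Gamma\vdash(\forall x)\phi$, provided $x$ is not free in $\Gamma$; ($\forall$-elim) $\Gamma\vdash(\forall x)\phi$ $\Rightarrow$ $\Gamma\vdash\phi[x/t]$ for any term $t$. *)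

theory Defs
  imports Main
begin

definition complete_oml :: "('a::complete_lattice \<Rightarrow> 'a) \<Rightarrow> bool" where
  "complete_oml neg \<longleftrightarrow>
     (\<forall>a b. a \<le> b \<longrightarrow> neg b \<le> neg a) \<and>
     (\<forall>a. neg (neg a) = a) \<and>
     (\<forall>a. inf a (neg a) = bot) \<and>
     (\<forall>a. sup a (neg a) = top) \<and>
     (\<forall>a b. a \<le> b \<longrightarrow> sup a (inf (neg a) b) = b)"

text \<open>Free variables are named (by natural numbers), bound variables are de Bruijn
  indices; hence formulas differing only in the names of bound variables are identified.
  Constants are elements of the type 'c (standing for the universe V^(Q)).\<close>

datatype 'c trm = Var nat | Cst 'c | Bnd nat

datatype 'c fm =
    Eq "'c trm" "'c trm"
  | Mem "'c trm" "'c trm"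
  | Conj "'c fm" "'c fm"
  | Imp "'c fm" "'c fm"
  | Neg "'c fm"
  | All "'c fm"

fun inst_trm :: "nat \<Rightarrow> 'c trm \<Rightarrow> 'c trm \<Rightarrow> 'c trm" where
  "inst_trm k t (Bnd i) = (if i = k then t else Bnd i)"
| "inst_trm k t s = s"

fun inst :: "nat \<Rightarrow> 'c trm \<Rightarrow> 'c fm \<Rightarrow> 'c fm" where
  "inst k t (Eq a b) = Eq (inst_trm k t a) (inst_trm k t b)"
| "inst k t (Mem a b) = Mem (inst_trm k t a) (inst_trm k t b)"
| "inst k t (Conj \<phi> \<psi>) = Conj (inst k t \<phi>) (inst k t \<psi>)"
| "inst k t (Imp \<phi> \<psi>) = Imp (inst k t \<phi>) (inst k t \<psi>)"
| "inst k t (Neg \<phi>) = Neg (inst k t \<phi>)"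
| "inst k t (All \<phi>) = All (inst (Suc k) t \<phi>)"

fun abst_trm :: "nat \<Rightarrow> nat \<Rightarrow> 'c trm \<Rightarrow> 'c trm" where
  "abst_trm k x (Var y) = (if y = x then Bnd k else Var y)"
| "abst_trm k x s = s"

fun abst :: "nat \<Rightarrow> nat \<Rightarrow> 'c fm \<Rightarrow> 'c fm" where
  "abst k x (Eq a b) = Eq (abst_trm k x a) (abst_trm k x b)"
| "abst k x (Mem a b) = Mem (abst_trm k x a) (abst_trm k x b)"
| "abst k x (Conj \<phi> \<psi>) = Conj (abst k x \<phi>) (abst k x \<psi>)"
| "abst k x (Imp \<phi> \<psi>) = Imp (abst k x \<phi>) (abst k x \<psi>)"
| "abst k x (Neg \<phi>) = Neg (abst k x \<phi>)"
| "abst k x (All \<phi>) = All (abst (Suc k) x \<phi>)"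

fun fv_trm :: "'c trm \<Rightarrow> nat set" where
  "fv_trm (Var x) = {x}"
| "fv_trm _ = {}"

fun fv :: "'c fm \<Rightarrow> nat set" where
  "fv (Eq a b) = fv_trm a \<union> fv_trm b"
| "fv (Mem a b) = fv_trm a \<union> fv_trm b"
| "fv (Conj \<phi> \<psi>) = fv \<phi> \<union> fv \<psi>"
| "fv (Imp \<phi> \<psi>) = fv \<phi> \<union> fv \<psi>"
| "fv (Neg \<phi>) = fv \<phi>"
| "fv (All \<phi>) = fv \<phi>"

fun bnd_ok_trm :: "nat \<Rightarrow> 'c trm \<Rightarrow> bool" where
  "bnd_ok_trm k (Bnd i) = (i < k)"
| "bnd_ok_trm k _ = True"

fun bnd_ok :: "nat \<Rightarrow> 'c fm \<Rightarrow> bool" where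
  "bnd_ok k (Eq a b) = (bnd_ok_trm k a \<and> bnd_ok_trm k b)"
| "bnd_ok k (Mem a b) = (bnd_ok_trm k a \<and> bnd_ok_trm k b)"
| "bnd_ok k (Conj \<phi> \<psi>) = (bnd_ok k \<phi> \<and> bnd_ok k \<psi>)"
| "bnd_ok k (Imp \<phi> \<psi>) = (bnd_ok k \<phi> \<and> bnd_ok k \<psi>)"
| "bnd_ok k (Neg \<phi>) = bnd_ok k \<phi>"
| "bnd_ok k (All \<phi>) = bnd_ok (Suc k) \<phi>"

definition lc :: "'c fm \<Rightarrow> bool" where
  "lc \<phi> \<longleftrightarrow> bnd_ok 0 \<phi>"

definition closed :: "'c fm \<Rightarrow> bool" where
  "closed \<phi> \<longleftrightarrow> lc \<phi> \<and> fv \<phi> = {}"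

fun is_term :: "'c trm \<Rightarrow> bool" where
  "is_term (Bnd _) = False"
| "is_term _ = True"

text \<open>deriv \<Gamma> \<psi> means the sequent \<Gamma> \<turnstile> \<psi> is derivable; the antecedent \<Gamma> is an
  ordered list, "\<Gamma>, \<phi>" is \<Gamma> @ [\<phi>].  The well-formedness side conditions on the
  rules that introduce new formulas only ensure that all formulas are well-formed.\<close>

inductive deriv :: "'c fm list \<Rightarrow> 'c fm \<Rightarrow> bool" where
  assumption: "\<lbrakk>\<forall>\<gamma>\<in>set \<Gamma>. lc \<gamma>; lc \<phi>\<rbrakk> \<Longrightarrow> deriv (\<Gamma> @ [\<phi>]) \<phi>"
| cut: "\<lbrakk>deriv \<Gamma> \<phi>; deriv (\<Gamma> @ [\<phi>]) \<psi>\<rbrakk> \<Longrightarrow> deriv \<Gamma> \<psi>"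
| paste: "\<lbrakk>deriv \<Gamma> \<phi>; deriv \<Gamma> \<psi>\<rbrakk> \<Longrightarrow> deriv (\<Gamma> @ [\<phi>]) \<psi>"
| compat_exchange: "\<lbrakk>deriv (\<Gamma> @ [\<phi>, \<psi>]) \<phi>; deriv (\<Gamma> @ [\<phi>, \<psi>]) \<chi>;
      deriv (\<Gamma> @ [\<psi>, \<phi>]) \<psi>\<rbrakk> \<Longrightarrow> deriv (\<Gamma> @ [\<psi>, \<phi>]) \<chi>"
| conj_intro: "\<lbrakk>deriv \<Gamma> \<phi>; deriv \<Gamma> \<psi>\<rbrakk> \<Longrightarrow> deriv \<Gamma> (Conj \<phi> \<psi>)"
| conj_elim1: "deriv \<Gamma> (Conj \<phi> \<psi>) \<Longrightarrow> deriv \<Gamma> \<phi>"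
| conj_elim2: "deriv \<Gamma> (Conj \<phi> \<psi>) \<Longrightarrow> deriv \<Gamma> \<psi>"
| imp_intro: "deriv (\<Gamma> @ [\<phi>]) \<psi> \<Longrightarrow> deriv \<Gamma> (Imp \<phi> \<psi>)"
| imp_elim: "deriv \<Gamma> (Imp \<phi> \<psi>) \<Longrightarrow> deriv (\<Gamma> @ [\<phi>]) \<psi>"
| excluded_middle: "\<lbrakk>deriv (\<Gamma> @ [\<phi>]) \<psi>; deriv (\<Gamma> @ [Neg \<phi>]) \<psi>\<rbrakk> \<Longrightarrow> deriv \<Gamma> \<psi>"
| explosion: "\<lbrakk>deriv \<Gamma> (Neg \<phi>); lc \<psi>\<rbrakk> \<Longrightarrow> deriv (\<Gamma> @ [\<phi>]) \<psi>"
| all_intro: "\<lbrakk>deriv \<Gamma> \<phi>; \<forall>\<gamma>\<in>set \<Gamma>. x \<notin> fv \<gamma>\<rbrakk> \<Longrightarrow> deriv \<Gamma> (All (abst 0 x \<phi>))"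
| all_elim: "\<lbrakk>deriv \<Gamma> (All \<phi>); is_term t\<rbrakk> \<Longrightarrow> deriv \<Gamma> (inst 0 t \<phi>)"

end

theory Submission
  imports Defs
begin

text \<open>Under an assignment \<sigma> of constants to the free variables, read an antecedent
  \<phi>1, ..., \<phi>n as the element obtained from top by successive Sasaki projections
  onto the values of \<phi>1, ..., \<phi>n. Sasaki projection onto a is left adjoint to the
  Sasaki arrow from a, which validates the implication rules, and orthomodularity
  supplies the remaining structural facts: projecting onto a fixes everything below a
  (cut, paste), two successive projections that land below the first projector
  agree with the projection onto the meet (compatible exchange), and
  (a \<rightarrow> z) \<sqinter> (\<not>a \<rightarrow> z) \<le> z (excluded middle). By induction on derivations the
  value of the antecedent lies below the value of the succedent for every \<sigma>, and the
  empty antecedent has value top.\<close>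

definition sasaki_proj :: "('q::complete_lattice \<Rightarrow> 'q) \<Rightarrow> 'q \<Rightarrow> 'q \<Rightarrow> 'q" where
  "sasaki_proj neg a c = inf a (sup (neg a) c)"

definition sasaki_imp :: "('q::complete_lattice \<Rightarrow> 'q) \<Rightarrow> 'q \<Rightarrow> 'q \<Rightarrow> 'q" where
  "sasaki_imp neg a b = sup (neg a) (inf a b)"

locale complete_orthomodular =
  fixes neg :: "'q::complete_lattice \<Rightarrow> 'q"
  assumes complete_oml: "complete_oml neg"
begin

lemma neg_antimono: "a \<le> b \<Longrightarrow> neg b \<le> neg a"
  using complete_oml unfolding complete_oml_def by blast

lemma neg_neg [simp]: "neg (neg a) = a"
  using complete_oml unfolding complete_oml_def by blast

lemma inf_neg [simp]: "inf a (neg a) = bot"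
  using complete_oml unfolding complete_oml_def by blast

lemma orthomodular: "a \<le> b \<Longrightarrow> sup a (inf (neg a) b) = b"
  using complete_oml unfolding complete_oml_def by blast

lemma neg_sup: "neg (sup a b) = inf (neg a) (neg b)"
proof (rule antisym)
  show "neg (sup a b) \<le> inf (neg a) (neg b)"
    by (simp add: neg_antimono)
  have "sup a b \<le> neg (inf (neg a) (neg b))"
    by (metis le_sup_iff inf_le1 inf_le2 neg_antimono neg_neg)
  then show "inf (neg a) (neg b) \<le> neg (sup a b)"
    by (metis neg_antimono neg_neg)
qed

lemma neg_inf: "neg (inf a b) = sup (neg a) (neg b)"
  by (metis neg_sup neg_neg)

lemma sasaki_proj_absorb: "c \<le> a \<Longrightarrow> sasaki_proj neg a c = c"
proof -
  assume "c \<le> a"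
  then have "sup (neg a) (inf a (neg c)) = neg c"
    using orthomodular[of "neg a" "neg c"] neg_antimono by simp
  then have "neg (sup (neg a) (inf a (neg c))) = c"
    by simp
  then show ?thesis
    by (simp add: sasaki_proj_def neg_sup neg_inf)
qed

lemma sasaki_proj_le: "sasaki_proj neg a c \<le> a"
  by (simp add: sasaki_proj_def)

lemma sasaki_proj_le_sup_neg: "sasaki_proj neg a c \<le> sup (neg a) c"
  by (simp add: sasaki_proj_def)

lemma le_sup_neg_sasaki_proj: "c \<le> sup (neg a) (sasaki_proj neg a c)"
proof -
  have "sup (neg a) (sasaki_proj neg a c) = sup (neg a) c"
    using orthomodular[of "neg a" "sup (neg a) c"] by (simp add: sasaki_proj_def)
  then show ?thesis
    by simp
qed

lemma sasaki_proj_le_iff: "sasaki_proj neg a c \<le> b \<longleftrightarrow> c \<le> sasaki_imp neg a b"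
proof
  assume "sasaki_proj neg a c \<le> b"
  then have "sasaki_proj neg a c \<le> inf a b"
    using sasaki_proj_le by simp
  then show "c \<le> sasaki_imp neg a b"
    using le_sup_neg_sasaki_proj[of c a] unfolding sasaki_imp_def
    by (meson order_trans sup_mono order_refl)
next
  assume "c \<le> sasaki_imp neg a b"
  then have "sasaki_proj neg a c \<le> inf a (sup (neg a) (inf a b))"
    unfolding sasaki_proj_def sasaki_imp_def by (meson inf_mono order_refl le_supI sup_ge1)
  also have "\<dots> = inf a b"
    using sasaki_proj_absorb[of "inf a b" a] by (simp add: sasaki_proj_def)
  finally show "sasaki_proj neg a c \<le> b"
    by simp
qed

lemma sasaki_proj_eq_bot: "c \<le> neg a \<Longrightarrow> sasaki_proj neg a c = bot"
  by (simp add: sasaki_proj_def sup_absorb1)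

lemma sasaki_proj_sasaki_proj:
  assumes "sasaki_proj neg a (sasaki_proj neg b c) \<le> b"
  shows "sasaki_proj neg a (sasaki_proj neg b c) = sasaki_proj neg (inf a b) c"
proof -
  define d where "d = sasaki_proj neg a (sasaki_proj neg b c)"
  have d_le: "d \<le> inf a b"
    using assms sasaki_proj_le unfolding d_def by simp
  have "d \<le> sup (neg a) (sasaki_proj neg b c)"
    unfolding d_def by (rule sasaki_proj_le_sup_neg)
  also have "\<dots> \<le> sup (neg a) (sup (neg b) c)"
    using sasaki_proj_le_sup_neg sup_mono by blast
  finally have "d \<le> sup (neg (inf a b)) c"
    by (simp add: neg_inf sup_assoc)
  with d_le have "d \<le> sasaki_proj neg (inf a b) c"
    by (simp add: sasaki_proj_def)
  moreover have "sasaki_proj neg (inf a b) c \<le> d"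
  proof -
    have "c \<le> sup (neg b) (sasaki_proj neg b c)"
      by (rule le_sup_neg_sasaki_proj)
    also have "\<dots> \<le> sup (neg b) (sup (neg a) d)"
      unfolding d_def using le_sup_neg_sasaki_proj sup_mono by blast
    also have "\<dots> = sasaki_imp neg (inf a b) d"
      using d_le by (simp add: sasaki_imp_def neg_inf inf_absorb2 sup_aci)
    finally show ?thesis
      by (simp add: sasaki_proj_le_iff)
  qed
  ultimately show ?thesis
    unfolding d_def by simp
qed

lemma sasaki_proj_commute:
  assumes "sasaki_proj neg b (sasaki_proj neg a c) \<le> a"
    and "sasaki_proj neg a (sasaki_proj neg b c) \<le> b"
  shows "sasaki_proj neg a (sasaki_proj neg b c) = sasaki_proj neg b (sasaki_proj neg a c)"
  using sasaki_proj_sasaki_proj[OF assms(1)] sasaki_proj_sasaki_proj[OF assms(2)]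
  by (simp add: inf_commute)

lemma inf_sasaki_imp_neg_le: "inf (sasaki_imp neg a z) (sasaki_imp neg (neg a) z) \<le> z"
proof -
  define p where "p = inf a z"
  define q where "q = inf (neg a) z"
  define w where "w = inf (sup (neg a) p) (sup a q)"
  have p_le: "p \<le> a" and q_le: "q \<le> neg a"
    unfolding p_def q_def by simp_all
  have "sup p q \<le> w"
    unfolding w_def using p_le q_le by (meson inf_greatest le_supI le_supI1 le_supI2 order_refl)
  moreover have "inf (neg p) (sup (neg a) p) = neg a"
    using sasaki_proj_absorb[of "neg a" "neg p"] neg_antimono[OF p_le]
    by (simp add: sasaki_proj_def sup_commute)
  moreover have "inf (neg q) (sup a q) = a"
    using sasaki_proj_absorb[of a "neg q"] neg_antimono[OF q_le]
    by (simp add: sasaki_proj_def sup_commute)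
  ultimately have "inf (neg (sup p q)) w = bot"
    unfolding w_def neg_sup by (metis inf_neg inf_aci)
  with \<open>sup p q \<le> w\<close> have "w = sup p q"
    using orthomodular[of "sup p q" w] by simp
  then show ?thesis
    unfolding w_def p_def q_def sasaki_imp_def by simp
qed

lemma sasaki_proj_cases:
  "sasaki_proj neg a c \<le> z \<Longrightarrow> sasaki_proj neg (neg a) c \<le> z \<Longrightarrow> c \<le> z"
  using inf_sasaki_imp_neg_le[of a z] by (simp add: sasaki_proj_le_iff) (meson le_inf_iff order_trans)

end

fun ground_trm :: "(nat \<Rightarrow> 'c) \<Rightarrow> 'c trm \<Rightarrow> 'c trm" where
  "ground_trm \<sigma> (Var x) = Cst (\<sigma> x)"
| "ground_trm \<sigma> s = s"

fun ground :: "(nat \<Rightarrow> 'c) \<Rightarrow> 'c fm \<Rightarrow> 'c fm" where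
  "ground \<sigma> (Eq a b) = Eq (ground_trm \<sigma> a) (ground_trm \<sigma> b)"
| "ground \<sigma> (Mem a b) = Mem (ground_trm \<sigma> a) (ground_trm \<sigma> b)"
| "ground \<sigma> (Conj \<phi> \<psi>) = Conj (ground \<sigma> \<phi>) (ground \<sigma> \<psi>)"
| "ground \<sigma> (Imp \<phi> \<psi>) = Imp (ground \<sigma> \<phi>) (ground \<sigma> \<psi>)"
| "ground \<sigma> (Neg \<phi>) = Neg (ground \<sigma> \<phi>)"
| "ground \<sigma> (All \<phi>) = All (ground \<sigma> \<phi>)"

lemma fv_ground [simp]: "fv (ground \<sigma> \<phi>) = {}"
proof (induction \<phi>)
  case (Eq a b) then show ?case by (cases a; cases b) auto
next
  case (Mem a b) then show ?case by (cases a; cases b) auto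
qed auto

lemma bnd_ok_ground [simp]: "bnd_ok k (ground \<sigma> \<phi>) = bnd_ok k \<phi>"
proof (induction \<phi> arbitrary: k)
  case (Eq a b) then show ?case by (cases a; cases b) auto
next
  case (Mem a b) then show ?case by (cases a; cases b) auto
qed auto

lemma closed_ground: "lc \<phi> \<Longrightarrow> closed (ground \<sigma> \<phi>)"
  by (simp add: lc_def closed_def)

lemma ground_inst: "ground \<sigma> (inst k t \<phi>) = inst k (ground_trm \<sigma> t) (ground \<sigma> \<phi>)"
proof (induction \<phi> arbitrary: k)
  case (Eq a b) then show ?case by (cases a; cases b) auto
next
  case (Mem a b) then show ?case by (cases a; cases b) auto
qed auto

lemma inst_ground_abst:
  "bnd_ok k \<phi> \<Longrightarrow> inst k (Cst u) (ground \<sigma> (abst k x \<phi>)) = ground (\<sigma>(x := u)) \<phi>"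
proof (induction \<phi> arbitrary: k)
  case (Eq a b) then show ?case by (cases a; cases b) auto
next
  case (Mem a b) then show ?case by (cases a; cases b) auto
qed auto

lemma ground_cong: "(\<And>y. y \<in> fv \<phi> \<Longrightarrow> \<sigma> y = \<tau> y) \<Longrightarrow> ground \<sigma> \<phi> = ground \<tau> \<phi>"
proof (induction \<phi>)
  case (Eq a b) then show ?case by (cases a; cases b) auto
next
  case (Mem a b) then show ?case by (cases a; cases b) auto
qed auto

lemma ground_eq_self: "fv \<phi> = {} \<Longrightarrow> ground \<sigma> \<phi> = \<phi>"
proof (induction \<phi>)
  case (Eq a b) then show ?case by (cases a; cases b) auto
next
  case (Mem a b) then show ?case by (cases a; cases b) auto
qed auto

lemma bnd_ok_inst: "bnd_ok (Suc k) \<phi> \<Longrightarrow> is_term t \<Longrightarrow> bnd_ok k (inst k t \<phi>)"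
proof (induction \<phi> arbitrary: k)
  case (Eq a b) then show ?case by (cases a; cases b; cases t) auto
next
  case (Mem a b) then show ?case by (cases a; cases b; cases t) auto
qed auto

lemma bnd_ok_abst: "bnd_ok k \<phi> \<Longrightarrow> bnd_ok (Suc k) (abst k x \<phi>)"
proof (induction \<phi> arbitrary: k)
  case (Eq a b) then show ?case by (cases a; cases b) auto
next
  case (Mem a b) then show ?case by (cases a; cases b) auto
qed auto

lemma lc_simps [simp]:
  "lc (Conj \<phi> \<psi>) \<longleftrightarrow> lc \<phi> \<and> lc \<psi>"
  "lc (Imp \<phi> \<psi>) \<longleftrightarrow> lc \<phi> \<and> lc \<psi>"
  "lc (Neg \<phi>) \<longleftrightarrow> lc \<phi>"
  by (simp_all add: lc_def)

lemma deriv_lc: "deriv \<Gamma> \<psi> \<Longrightarrow> (\<forall>\<gamma>\<in>set \<Gamma>. lc \<gamma>) \<and> lc \<psi>"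
proof (induction rule: deriv.induct)
  case (all_intro \<Gamma> \<phi> x) then show ?case by (auto simp: lc_def intro: bnd_ok_abst)
next
  case (all_elim \<Gamma> \<phi> t) then show ?case by (auto simp: lc_def intro: bnd_ok_inst)
qed auto

locale nom_valuation = complete_orthomodular neg for neg :: "'q::complete_lattice \<Rightarrow> 'q" +
  fixes I :: "'c fm \<Rightarrow> 'q"
  assumes I_conj: "\<And>\<phi> \<psi>. closed (Conj \<phi> \<psi>) \<Longrightarrow> I (Conj \<phi> \<psi>) = inf (I \<phi>) (I \<psi>)"
    and I_neg: "\<And>\<phi>. closed (Neg \<phi>) \<Longrightarrow> I (Neg \<phi>) = neg (I \<phi>)"
    and I_imp: "\<And>\<phi> \<psi>. closed (Imp \<phi> \<psi>) \<Longrightarrow>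
                  I (Imp \<phi> \<psi>) = sup (neg (I \<phi>)) (inf (I \<phi>) (I \<psi>))"
    and I_all: "\<And>\<phi>. closed (All \<phi>) \<Longrightarrow> I (All \<phi>) = (INF u. I (inst 0 (Cst u) \<phi>))"
begin

lemma I_ground_Conj:
  "lc (Conj \<phi> \<psi>) \<Longrightarrow> I (ground \<sigma> (Conj \<phi> \<psi>)) = inf (I (ground \<sigma> \<phi>)) (I (ground \<sigma> \<psi>))"
  using closed_ground[of "Conj \<phi> \<psi>" \<sigma>] by (simp add: I_conj)

lemma I_ground_Neg: "lc (Neg \<phi>) \<Longrightarrow> I (ground \<sigma> (Neg \<phi>)) = neg (I (ground \<sigma> \<phi>))"
  using closed_ground[of "Neg \<phi>" \<sigma>] by (simp add: I_neg)

lemma I_ground_Imp: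
  "lc (Imp \<phi> \<psi>) \<Longrightarrow> I (ground \<sigma> (Imp \<phi> \<psi>)) = sasaki_imp neg (I (ground \<sigma> \<phi>)) (I (ground \<sigma> \<psi>))"
  using closed_ground[of "Imp \<phi> \<psi>" \<sigma>] by (simp add: I_imp sasaki_imp_def)

lemma I_ground_All:
  "lc (All \<phi>) \<Longrightarrow> I (ground \<sigma> (All \<phi>)) = (INF u. I (inst 0 (Cst u) (ground \<sigma> \<phi>)))"
  using closed_ground[of "All \<phi>" \<sigma>] by (simp add: I_all)

definition antecedent_value :: "(nat \<Rightarrow> 'c) \<Rightarrow> 'c fm list \<Rightarrow> 'q" where
  "antecedent_value \<sigma> \<Gamma> = foldl (\<lambda>c \<phi>. sasaki_proj neg (I (ground \<sigma> \<phi>)) c) top \<Gamma>"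

lemma antecedent_value_Nil [simp]: "antecedent_value \<sigma> [] = top"
  by (simp add: antecedent_value_def)

lemma antecedent_value_snoc [simp]:
  "antecedent_value \<sigma> (\<Gamma> @ [\<phi>]) = sasaki_proj neg (I (ground \<sigma> \<phi>)) (antecedent_value \<sigma> \<Gamma>)"
  by (simp add: antecedent_value_def)

lemma antecedent_value_snoc2 [simp]:
  "antecedent_value \<sigma> (\<Gamma> @ [\<phi>, \<psi>]) =
     sasaki_proj neg (I (ground \<sigma> \<psi>)) (sasaki_proj neg (I (ground \<sigma> \<phi>)) (antecedent_value \<sigma> \<Gamma>))"
  by (simp add: antecedent_value_def)

lemma antecedent_value_cong:
  "(\<And>\<gamma>. \<gamma> \<in> set \<Gamma> \<Longrightarrow> ground \<sigma> \<gamma> = ground \<tau> \<gamma>) \<Longrightarrow> antecedent_value \<sigma> \<Gamma> = antecedent_value \<tau> \<Gamma>"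
  unfolding antecedent_value_def by (rule foldl_cong) auto

theorem deriv_sound: "deriv \<Gamma> \<psi> \<Longrightarrow> antecedent_value \<sigma> \<Gamma> \<le> I (ground \<sigma> \<psi>)"
proof (induction arbitrary: \<sigma> rule: deriv.induct)
  case (assumption \<Gamma> \<phi>)
  then show ?case by (simp add: sasaki_proj_le)
next
  case (cut \<Gamma> \<phi> \<psi>)
  then show ?case by (metis antecedent_value_snoc sasaki_proj_absorb)
next
  case (paste \<Gamma> \<phi> \<psi>)
  then show ?case by (simp add: sasaki_proj_absorb)
next
  case (compat_exchange \<Gamma> \<phi> \<psi> \<chi>)
  then show ?case by (metis antecedent_value_snoc2 sasaki_proj_commute)
next
  case (conj_intro \<Gamma> \<phi> \<psi>)
  then show ?case using deriv_lc[OF conj_intro.hyps(1)] deriv_lc[OF conj_intro.hyps(2)]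
    by (simp add: I_ground_Conj del: ground.simps)
next
  case (conj_elim1 \<Gamma> \<phi> \<psi>)
  then show ?case using deriv_lc[OF conj_elim1.hyps] by (simp add: I_ground_Conj del: ground.simps)
next
  case (conj_elim2 \<Gamma> \<phi> \<psi>)
  then show ?case using deriv_lc[OF conj_elim2.hyps] by (simp add: I_ground_Conj del: ground.simps)
next
  case (imp_intro \<Gamma> \<phi> \<psi>)
  then show ?case using deriv_lc[OF imp_intro.hyps]
    by (simp add: I_ground_Imp sasaki_proj_le_iff del: ground.simps)
next
  case (imp_elim \<Gamma> \<phi> \<psi>)
  then show ?case using deriv_lc[OF imp_elim.hyps]
    by (simp add: I_ground_Imp sasaki_proj_le_iff del: ground.simps)
next
  case (excluded_middle \<Gamma> \<phi> \<psi>)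
  then have "sasaki_proj neg (neg (I (ground \<sigma> \<phi>))) (antecedent_value \<sigma> \<Gamma>) \<le> I (ground \<sigma> \<psi>)"
    using deriv_lc[OF excluded_middle.hyps(2)] by (simp add: I_ground_Neg del: ground.simps)
  with excluded_middle show ?case by (simp add: sasaki_proj_cases)
next
  case (explosion \<Gamma> \<phi> \<psi>)
  then show ?case using deriv_lc[OF explosion.hyps(1)]
    by (simp add: I_ground_Neg sasaki_proj_eq_bot del: ground.simps)
next
  case (all_intro \<Gamma> \<phi> x)
  have bnd_ok_\<phi>: "bnd_ok 0 \<phi>"
    using deriv_lc[OF all_intro.hyps(1)] by (simp add: lc_def)
  have "antecedent_value \<sigma> \<Gamma> \<le> I (inst 0 (Cst u) (ground \<sigma> (abst 0 x \<phi>)))" for u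
  proof -
    have "antecedent_value \<sigma> \<Gamma> = antecedent_value (\<sigma>(x := u)) \<Gamma>"
      using all_intro.hyps(2) by (intro antecedent_value_cong ground_cong) auto
    also have "\<dots> \<le> I (ground (\<sigma>(x := u)) \<phi>)"
      by (rule all_intro.IH)
    finally show ?thesis
      by (simp only: inst_ground_abst[OF bnd_ok_\<phi>])
  qed
  moreover have "lc (All (abst 0 x \<phi>))"
    using bnd_ok_abst[OF bnd_ok_\<phi>] by (simp add: lc_def)
  ultimately show ?case
    by (simp add: I_ground_All INF_greatest del: ground.simps)
next
  case (all_elim \<Gamma> \<phi> t)
  obtain u where u: "ground_trm \<sigma> t = Cst u"
    using all_elim.hyps(2) by (cases t) auto
  have "antecedent_value \<sigma> \<Gamma> \<le> (INF u. I (inst 0 (Cst u) (ground \<sigma> \<phi>)))"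
    using all_elim.IH[of \<sigma>] deriv_lc[OF all_elim.hyps(1)] by (simp add: I_ground_All del: ground.simps)
  also have "\<dots> \<le> I (inst 0 (Cst u) (ground \<sigma> \<phi>))"
    by (rule INF_lower) simp
  finally show ?case
    by (simp add: ground_inst u)
qed

end

theorem corollary5p2:
  fixes neg :: "'q::complete_lattice \<Rightarrow> 'q"
    and I :: "'c fm \<Rightarrow> 'q"
  assumes oml: "complete_oml neg"
    and I_conj: "\<And>\<phi> \<psi>. closed (Conj \<phi> \<psi>) \<Longrightarrow> I (Conj \<phi> \<psi>) = inf (I \<phi>) (I \<psi>)"
    and I_neg: "\<And>\<phi>. closed (Neg \<phi>) \<Longrightarrow> I (Neg \<phi>) = neg (I \<phi>)"
    and I_imp: "\<And>\<phi> \<psi>. closed (Imp \<phi> \<psi>) \<Longrightarrow>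
                  I (Imp \<phi> \<psi>) = sup (neg (I \<phi>)) (inf (I \<phi>) (I \<psi>))"
    and I_all: "\<And>\<phi>. closed (All \<phi>) \<Longrightarrow> I (All \<phi>) = (INF u. I (inst 0 (Cst u) \<phi>))"
    and cl: "closed \<phi>"
    and der: "deriv [] \<phi>"
  shows "I \<phi> = top"
proof -
  interpret nom_valuation neg I
    by unfold_locales (use oml I_conj I_neg I_imp I_all in auto)
  fix \<sigma> :: "nat \<Rightarrow> 'c"
  have "top \<le> I (ground \<sigma> \<phi>)"
    using deriv_sound[OF der, of \<sigma>] by simp
  moreover have "ground \<sigma> \<phi> = \<phi>"
    using cl by (simp add: closed_def ground_eq_self)
  ultimately show ?thesis
    by (simp add: top_le)
qed

end
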